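(* For each positive integer $k$ there is $c_k>0$ such that the following holds. Suppose $P$ is a complete polynomial of degree $k$ with integer coefficients in its binomial representation. If $x$ is sufficiently large and $1<w<(\log x)/2$ is an integer, then the set $X$ of integers $y\in[x,(1+1/k)x)$ such that $P(y)$ has no prime divisor at most $w$ satisfies $|X|\ge c_k(\log w)^{-k}x$.
   Context: Every real polynomial of degree $k$ can be written as $P(x)=\sum_{i=0}^k\alpha_i\binom{x}{i}$; $P$ has integer coefficients in its binomial representation if all $\alpha_i$ are integers. $P$ is complete if every sufficiently large positive integer is a sum of distinct terms of $(P(m))_{m\ge1}$. $\log$ is the natural logarithm. *)

theory Defs
  imports Complex_Main "HOL-Computational_Algebra.Primes"
begin

definition binpoly :: "(nat \<Rightarrow> int) \<Rightarrow> nat \<Rightarrow> nat \<Rightarrow> int" where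
  "binpoly \<alpha> k m = (\<Sum>i\<le>k. \<alpha> i * int (m choose i))"

text \<open>Completeness: every sufficiently large positive integer is a sum of distinct
terms of the sequence (P(m))_{m>=1}, i.e. a sum over a finite set of indices m >= 1.\<close>
definition complete_seq :: "(nat \<Rightarrow> int) \<Rightarrow> bool" where
  "complete_seq f \<longleftrightarrow> (\<exists>N::int. \<forall>n\<ge>N. n > 0 \<longrightarrow>
      (\<exists>S. finite S \<and> S \<subseteq> {1..} \<and> n = (\<Sum>m\<in>S. f m)))"

end

(* Whether a prime p divides P(y) depends only on y modulo p^(v_p(k!)+1), by Vandermonde's
   identity, and only on y mod p once p > k. Completeness forbids p from dividing every value of P,
   so at least one residue class survives at every prime, and for p > k at least p - k classes
   survive, since k! P is an integer polynomial of degree at most k that does not vanish identically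
   mod p. By the Chinese remainder theorem the surviving classes modulo
   T = prod_{p <= w} p^(v_p(k!)+1) have density at least c prod_{2k < p <= w} (1 - k/p), which is
   at least c' (log w)^(-k) by the elementary Mertens bound sum_{p <= w} 1/p <= log log w + O(1).
   Finally T <= C 4^w < C x^(log 2) by Chebyshev's bound, so [x, (1 + 1/k) x) contains about
   x/(kT) complete periods. *)

theory Submission
  imports Defs "HOL-Number_Theory.Number_Theory" "HOL-Computational_Algebra.Polynomial"
begin

section \<open>Chebyshev's and Mertens' bounds\<close>

lemma prod_pairwise_coprime_dvd:
  fixes N :: nat
  assumes "finite S" "\<And>s. s \<in> S \<Longrightarrow> f s dvd N"
    and "\<And>s t. s \<in> S \<Longrightarrow> t \<in> S \<Longrightarrow> s \<noteq> t \<Longrightarrow> coprime (f s) (f t)"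
  shows "prod f S dvd N"
  using assms
proof (induction S rule: finite_induct)
  case (insert s S)
  then have "coprime (f s) (prod f S)"
    by (intro prod_coprime_right) auto
  with insert show ?case
    by (simp add: divides_mult)
qed simp

lemma binomial_odd_middle_le: "(2*m+1 choose m) \<le> 4^m"
proof -
  have "(2*m+1 choose m) + (2*m+1 choose (m+1)) = (\<Sum>i\<in>{m, m+1}. 2*m+1 choose i)"
    by simp
  also have "\<dots> \<le> (\<Sum>i\<le>2*m+1. 2*m+1 choose i)"
    by (rule sum_mono2) auto
  also have "\<dots> = 2 * 4^m"
    by (simp only: choose_row_sum) (simp add: power_mult)
  finally show ?thesis
    using binomial_symmetric[of m "2*m+1"] by simp
qed

lemma prime_dvd_binomial_odd_middle:
  assumes "prime p" "m + 1 < p" "p \<le> 2*m+1"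
  shows "p dvd (2*m+1 choose m)"
proof -
  have "fact m * fact (m+1) * (2*m+1 choose m) = (fact (2*m+1) :: nat)"
    using binomial_fact_lemma[of m "2*m+1"] by (simp add: Suc_diff_le)
  moreover have "p dvd (fact (2*m+1) :: nat)"
    using assms prime_dvd_fact_iff[of p "2*m+1"] by blast
  moreover have "\<not> p dvd (fact m :: nat)" "\<not> p dvd (fact (m+1) :: nat)"
    using assms prime_dvd_fact_iff[of p m] prime_dvd_fact_iff[of p "m+1"] by auto
  ultimately show ?thesis
    using assms(1) by (metis prime_dvd_mult_iff)
qed

lemma prod_primes_between_le: "\<Prod>{p. prime p \<and> m + 1 < p \<and> p \<le> 2*m+1} \<le> 4^m"
proof -
  have "\<Prod>{p. prime p \<and> m + 1 < p \<and> p \<le> 2*m+1} dvd (2*m+1 choose m)"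
    by (rule prod_pairwise_coprime_dvd)
       (use prime_dvd_binomial_odd_middle[of _ m] in \<open>auto intro: primes_coprime\<close>)
  then have "\<Prod>{p. prime p \<and> m + 1 < p \<and> p \<le> 2*m+1} \<le> (2*m+1 choose m)"
    by (rule dvd_imp_le) simp
  then show ?thesis
    using binomial_odd_middle_le[of m] by (rule order_trans)
qed

lemma prod_primes_le_four_pow: "\<Prod>{p::nat. prime p \<and> p \<le> n} \<le> 4^n"
proof (induction n rule: less_induct)
  case (less n)
  consider "n \<le> 2" | "n > 2" "even n" | m where "n = 2*m+1" "m \<ge> 1"
  proof (cases "n \<le> 2")
    case False
    then show thesis
      using that by (cases "even n") (auto elim!: oddE)
  qed (use that in auto)
  then show ?case
  proof cases
    case 1
    then have "{p::nat. prime p \<and> p \<le> n} = (if n = 2 then {2} else {})"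
      by (auto dest: prime_ge_2_nat)
    then show ?thesis by simp
  next
    case 2
    then have "\<not> prime n"
      using prime_odd_nat[of n] by auto
    then have "{p. prime p \<and> p \<le> n} = {p. prime p \<and> p \<le> n - 1}"
      using 2 by (auto simp: order.order_iff_strict)
    also have "\<Prod>\<dots> \<le> 4^(n-1)"
      using 2 by (intro less.IH) auto
    also have "\<dots> \<le> 4^n"
      by (intro power_increasing) auto
    finally show ?thesis .
  next
    case 3
    have "{p. prime p \<and> p \<le> n} = {p. prime p \<and> p \<le> m+1} \<union> {p. prime p \<and> m+1 < p \<and> p \<le> 2*m+1}"
      using 3 by auto
    then have "\<Prod>{p. prime p \<and> p \<le> n} = \<Prod>{p. prime p \<and> p \<le> m+1} * \<Prod>{p. prime p \<and> m+1 < p \<and> p \<le> 2*m+1}"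
      by (simp add: prod.union_disjoint disjoint_iff)
    also have "\<dots> \<le> 4^(m+1) * 4^m"
      using 3 less.IH[of "m+1"] prod_primes_between_le[of m] by (intro mult_le_mono) auto
    also have "\<dots> = 4^n"
      by (simp add: 3 flip: power_add)
    finally show ?thesis .
  qed
qed

lemma sum_ln_primes_le: "(\<Sum>p | prime p \<and> p \<le> n. ln (real p)) \<le> real n * ln 4"
proof -
  have "(\<Sum>p | prime p \<and> p \<le> n. ln (real p)) = ln (\<Prod>p | prime p \<and> p \<le> n. real p)"
    by (subst ln_prod) (auto simp: prime_gt_0_nat)
  also have "\<dots> \<le> ln (4 ^ n)"
  proof (rule ln_mono)
    have "real (\<Prod>{p. prime p \<and> p \<le> n}) \<le> 4 ^ n"
      using prod_primes_le_four_pow[of n] by (metis of_nat_le_iff of_nat_numeral of_nat_power)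
    then show "(\<Prod>p | prime p \<and> p \<le> n. real p) \<le> 4 ^ n"
      by simp
  qed (auto simp: prime_gt_0_nat intro!: prod_pos)
  finally show ?thesis
    by (simp add: ln_realpow)
qed

lemma prime_power_div_dvd_fact:
  fixes p n :: nat
  assumes "p > 0"
  shows "p ^ (n div p) dvd fact n"
proof -
  have "(\<Prod>j=1..n div p. j * p) = fact (n div p) * p ^ (n div p)"
    by (simp add: prod.distrib fact_prod)
  moreover have "(\<Prod>j=1..n div p. j * p) = \<Prod>((\<lambda>j. j * p) ` {1..n div p})"
    using assms by (simp add: prod.reindex inj_on_def)
  moreover have "(\<lambda>j. j * p) ` {1..n div p} \<subseteq> {1..n}"
    using assms by (auto simp: less_eq_div_iff_mult_less_eq)
  ultimately have "fact (n div p) * p ^ (n div p) dvd \<Prod>{1..n}"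
    by (metis finite_atLeastAtMost prod_dvd_prod_subset)
  then show ?thesis
    by (simp add: fact_prod dvd_mult_right)
qed

lemma sum_div_mult_ln_primes_le:
  "(\<Sum>p | prime p \<and> p \<le> n. real (n div p) * ln (real p)) \<le> real n * ln (real n)"
proof -
  let ?P = "{p::nat. prime p \<and> p \<le> n}"
  have "(\<Prod>p\<in>?P. p ^ (n div p)) dvd fact n"
    by (rule prod_pairwise_coprime_dvd)
       (auto intro: prime_power_div_dvd_fact prime_gt_0_nat primes_coprime)
  then have "(\<Prod>p\<in>?P. p ^ (n div p)) \<le> (fact n :: nat)"
    by (rule dvd_imp_le) simp
  then have "real (\<Prod>p\<in>?P. p ^ (n div p)) \<le> real (fact n)"
    by (simp only: of_nat_le_iff)
  then have "(\<Prod>p\<in>?P. real p ^ (n div p)) \<le> fact n"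
    by simp
  also have "(fact n :: real) \<le> real n ^ n"
    using fact_le_power[where 'a=real, of n] by simp
  finally have le: "(\<Prod>p\<in>?P. real p ^ (n div p)) \<le> real n ^ n" .
  show ?thesis
  proof (cases "n = 0")
    case False
    have "(\<Sum>p\<in>?P. real (n div p) * ln (real p)) = ln (\<Prod>p\<in>?P. real p ^ (n div p))"
      by (subst ln_prod) (auto simp: ln_realpow prime_gt_0_nat)
    also have "\<dots> \<le> ln (real n ^ n)"
      using le False by (subst ln_le_cancel_iff) (auto simp: prime_gt_0_nat intro!: prod_pos)
    finally show ?thesis
      using False by (simp add: ln_realpow)
  qed simp
qed

lemma sum_ln_prime_div_prime_le:
  assumes "n \<ge> 1"
  shows "(\<Sum>p | prime p \<and> p \<le> n. ln (real p) / real p) \<le> ln (real n) + ln 4"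
proof -
  let ?P = "{p::nat. prime p \<and> p \<le> n}"
  have "(real n / real p - 1) * ln p \<le> real (n div p) * ln p" if "p \<in> ?P" for p
  proof (rule mult_right_mono)
    from that have p: "real p > 0"
      by (simp add: prime_gt_0_nat)
    have "real n = real p * real (n div p) + real (n mod p)"
      by (metis mult_div_mod_eq of_nat_add of_nat_mult)
    moreover have "real (n mod p) < real p"
      using p by simp
    ultimately show "real n / real p - 1 \<le> real (n div p)"
      using p by (simp add: field_simps)
  qed (use that in \<open>auto dest: prime_gt_0_nat\<close>)
  then have "(\<Sum>p\<in>?P. (real n / real p - 1) * ln p) \<le> (\<Sum>p\<in>?P. real (n div p) * ln p)"
    by (rule sum_mono)
  also have "\<dots> \<le> real n * ln n"
    by (rule sum_div_mult_ln_primes_le)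
  finally have "(\<Sum>p\<in>?P. (real n / real p - 1) * ln p) \<le> real n * ln n" .
  moreover have "(\<Sum>p\<in>?P. (real n / real p - 1) * ln p)
      = real n * (\<Sum>p\<in>?P. ln (real p) / real p) - (\<Sum>p\<in>?P. ln (real p))"
    by (simp add: sum_distrib_left sum_subtractf left_diff_distrib)
  ultimately have "real n * (\<Sum>p\<in>?P. ln (real p) / real p) \<le> real n * (ln n + ln 4)"
    using sum_ln_primes_le[of n] by (simp add: algebra_simps)
  then show ?thesis
    using assms by simp
qed

lemma diff_divide_le_ln_diff:
  fixes u v :: real
  assumes "0 < u" "u \<le> v"
  shows "(v - u) / v \<le> ln v - ln u"
proof -
  have "ln (u / v) \<le> u / v - 1"
    using assms by (intro ln_le_minus_one) auto
  then show ?thesis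
    using assms by (simp add: ln_div diff_divide_distrib)
qed

text \<open>Partial summation, done as an induction on \<open>N\<close>: the remainder term is nonnegative by
  the previous bound, and carrying it along makes the estimate inductive.\<close>
lemma sum_inverse_primes_plus_remainder_le:
  fixes N :: nat
  assumes "N \<ge> 2"
  shows "(\<Sum>p | prime p \<and> p \<le> N. 1 / real p)
      + (ln N + ln 4 - (\<Sum>p | prime p \<and> p \<le> N. ln (real p) / real p)) / ln N
      \<le> ln (ln N) + 1 + ln 4 / ln 2 - ln (ln 2)"
  using assms
proof (induction N rule: nat_induct_at_least)
  case base
  have "{p::nat. prime p \<and> p \<le> 2} = {2}"
    by (auto dest: prime_ge_2_nat)
  then show ?case
    by (simp add: field_simps)
next
  case (Suc N)
  define T where "T n = (\<Sum>p | prime p \<and> p \<le> n. 1 / real p)" for n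
  define S where "S n = (\<Sum>p | prime p \<and> p \<le> n. ln (real p) / real p)" for n
  have lnN: "0 < ln N" "ln N \<le> ln (Suc N)" "0 < ln (Suc N)"
    using Suc.hyps by auto
  have T_step: "T (Suc N) = T N + (S (Suc N) - S N) / ln (Suc N)"
  proof (cases "prime (Suc N)")
    case True
    then have "{p. prime p \<and> p \<le> Suc N} = insert (Suc N) {p. prime p \<and> p \<le> N}"
      by (auto simp: le_Suc_eq)
    then show ?thesis
      using lnN Suc.hyps by (simp add: T_def S_def)
  next
    case False
    then have "{p. prime p \<and> p \<le> Suc N} = {p. prime p \<and> p \<le> N}"
      by (auto simp: le_Suc_eq)
    then show ?thesis
      by (simp add: T_def S_def)
  qed
  have "0 \<le> ln N + ln 4 - S N"
    using sum_ln_prime_div_prime_le[of N] Suc.hyps by (simp add: S_def)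
  then have "(ln N + ln 4 - S N) / ln (Suc N) \<le> (ln N + ln 4 - S N) / ln N"
    using lnN by (intro divide_left_mono mult_pos_pos) auto
  moreover have "(ln (Suc N) - ln N) / ln (Suc N) \<le> ln (ln (Suc N)) - ln (ln N)"
    using lnN by (intro diff_divide_le_ln_diff) auto
  moreover have "T (Suc N) + (ln (Suc N) + ln 4 - S (Suc N)) / ln (Suc N)
      = T N + (ln N + ln 4 - S N) / ln (Suc N) + (ln (Suc N) - ln N) / ln (Suc N)"
    unfolding T_step using lnN by (simp add: field_simps)
  ultimately show ?case
    using Suc.IH unfolding T_def S_def by linarith
qed

lemma sum_inverse_primes_le:
  fixes N :: nat
  assumes "N \<ge> 2"
  shows "(\<Sum>p | prime p \<and> p \<le> N. 1 / real p) \<le> ln (ln N) + 1 + ln 4 / ln 2 - ln (ln 2)"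
proof -
  have "0 \<le> (ln N + ln 4 - (\<Sum>p | prime p \<and> p \<le> N. ln (real p) / real p)) / ln N"
    using sum_ln_prime_div_prime_le[of N] assms by simp
  with sum_inverse_primes_plus_remainder_le[OF assms] show ?thesis
    by linarith
qed

lemma sum_inverse_mult_pred: "N \<ge> 1 \<Longrightarrow> (\<Sum>n=2..N. 1 / (real n * (real n - 1))) = 1 - 1 / real N"
proof (induction N rule: nat_induct_at_least)
  case (Suc N)
  have "{2..Suc N} = insert (Suc N) {2..N}"
    using Suc by auto
  then have "(\<Sum>n=2..Suc N. 1 / (real n * (real n - 1)))
      = 1 / (real (Suc N) * (real (Suc N) - 1)) + (\<Sum>n=2..N. 1 / (real n * (real n - 1)))"
    by (simp only:) (rule sum.insert, auto)
  also have "\<dots> = 1 / (real (Suc N) * real N) + (1 - 1 / real N)"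
    by (subst Suc.IH) simp
  also have "\<dots> = 1 - 1 / real (Suc N)"
    using Suc.hyps by (simp add: divide_simps) (simp add: algebra_simps)
  finally show ?case .
qed simp

lemma sum_inverse_prime_squares_le: "(\<Sum>p | prime p \<and> p \<le> w. 1 / (real p)^2) \<le> 1"
proof (cases "w = 0")
  case False
  have "(\<Sum>p | prime p \<and> p \<le> w. 1 / (real p)^2) \<le> (\<Sum>p | prime p \<and> p \<le> w. 1 / (real p * (real p - 1)))"
    by (intro sum_mono divide_left_mono) (auto simp: power2_eq_square dest!: prime_ge_2_nat)
  also have "\<dots> \<le> (\<Sum>n=2..w. 1 / (real n * (real n - 1)))"
    by (intro sum_mono2) (auto dest: prime_ge_2_nat)
  also have "\<dots> \<le> 1"
    using False sum_inverse_mult_pred[of w] by simp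
  finally show ?thesis .
qed simp

lemma prod_one_minus_ge_exp:
  fixes t :: "'a \<Rightarrow> real"
  assumes "finite S" "\<And>s. s \<in> S \<Longrightarrow> 0 \<le> t s \<and> t s \<le> 1/2"
  shows "exp (- (\<Sum>s\<in>S. t s) - 2 * (\<Sum>s\<in>S. (t s)^2)) \<le> (\<Prod>s\<in>S. 1 - t s)"
proof -
  have "- (\<Sum>s\<in>S. t s) - 2 * (\<Sum>s\<in>S. (t s)^2) = (\<Sum>s\<in>S. - t s - 2 * (t s)^2)"
    by (simp add: sum_subtractf sum_negf sum_distrib_left)
  also have "\<dots> \<le> (\<Sum>s\<in>S. ln (1 - t s))"
    using assms(2) by (intro sum_mono ln_one_minus_pos_lower_bound) auto
  finally have "exp (- (\<Sum>s\<in>S. t s) - 2 * (\<Sum>s\<in>S. (t s)^2)) \<le> exp (\<Sum>s\<in>S. ln (1 - t s))"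
    by simp
  also have "\<dots> = (\<Prod>s\<in>S. exp (ln (1 - t s)))"
    by (rule exp_sum[OF assms(1)])
  also have "\<dots> = (\<Prod>s\<in>S. 1 - t s)"
  proof (intro prod.cong refl exp_ln)
    fix s assume "s \<in> S"
    with assms(2) show "0 < 1 - t s"
      by fastforce
  qed
  finally show ?thesis .
qed

lemma prod_one_minus_div_primes_ge:
  "\<exists>c>0. \<forall>w\<ge>2. c * ln (real w) powr - real k
      \<le> (\<Prod>p | prime p \<and> 2 * k < p \<and> p \<le> w. 1 - real k / real p)"
proof (intro exI conjI allI impI)
  define B where "B = 1 + ln 4 / ln 2 - ln (ln (2::real))"
  show "exp (- real k * B - 2 * (real k)^2) > 0"
    by simp
  fix w :: nat assume w: "w \<ge> 2"
  let ?S = "{p. prime p \<and> 2 * k < p \<and> p \<le> w}"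
  have "(\<Sum>p\<in>?S. 1 / real p) \<le> (\<Sum>p | prime p \<and> p \<le> w. 1 / real p)"
    by (intro sum_mono2) auto
  also have "\<dots> \<le> ln (ln w) + B"
    unfolding B_def using sum_inverse_primes_le[OF w] by simp
  finally have "real k * (\<Sum>p\<in>?S. 1 / real p) \<le> real k * (ln (ln w) + B)"
    by (intro mult_left_mono) auto
  moreover have "(\<Sum>p\<in>?S. 1 / (real p)^2) \<le> (\<Sum>p | prime p \<and> p \<le> w. 1 / (real p)^2)"
    by (intro sum_mono2) auto
  with sum_inverse_prime_squares_le[of w] have "(real k)^2 * (\<Sum>p\<in>?S. 1 / (real p)^2) \<le> (real k)^2"
    by (simp add: mult_left_le)
  moreover have "(\<Sum>p\<in>?S. real k / real p) = real k * (\<Sum>p\<in>?S. 1 / real p)"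
    "(\<Sum>p\<in>?S. (real k / real p)^2) = (real k)^2 * (\<Sum>p\<in>?S. 1 / (real p)^2)"
    by (simp_all add: sum_distrib_left power_divide)
  ultimately have "- real k * (ln (ln w) + B) - 2 * (real k)^2
      \<le> - (\<Sum>p\<in>?S. real k / real p) - 2 * (\<Sum>p\<in>?S. (real k / real p)^2)"
    by linarith
  then have "exp (- real k * (ln (ln w) + B) - 2 * (real k)^2)
      \<le> exp (- (\<Sum>p\<in>?S. real k / real p) - 2 * (\<Sum>p\<in>?S. (real k / real p)^2))"
    by simp
  also have "\<dots> \<le> (\<Prod>p\<in>?S. 1 - real k / real p)"
    by (rule prod_one_minus_ge_exp) (auto simp: field_simps)
  also have "exp (- real k * (ln (ln w) + B) - 2 * (real k)^2)
      = exp (- real k * B - 2 * (real k)^2) * ln (real w) powr - real k"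
    using w by (simp add: powr_def algebra_simps flip: exp_add)
  finally show "exp (- real k * B - 2 * (real k)^2) * ln (real w) powr - real k
      \<le> (\<Prod>p\<in>?S. 1 - real k / real p)" .
qed

section \<open>Binomial polynomials modulo primes\<close>

lemma synthetic_div_not_all_coeffs_dvd:
  fixes f :: "'a::comm_ring_1 poly"
  assumes "d dvd poly f a" "\<exists>i. \<not> d dvd coeff f i"
  shows "\<exists>i. \<not> d dvd coeff (synthetic_div f a) i"
proof (rule ccontr)
  let ?g = "synthetic_div f a"
  assume "\<not> ?thesis"
  then have "d dvd coeff ([:- a, 1:] * ?g) i" for i
    unfolding coeff_mult by (intro dvd_sum dvd_mult) auto
  moreover have "d dvd coeff [:poly f a:] i" for i
    using assms(1) by (cases i) auto
  ultimately have "d dvd coeff f i" for i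
    by (subst synthetic_div_correct'[of a f, symmetric]) (simp add: dvd_add)
  with assms(2) show False
    by blast
qed

lemma roots_mod_prime_subset_synthetic_div:
  fixes f :: "int poly"
  assumes "prime p" "a < p" "int p dvd poly f (int a)"
  shows "{r. r < p \<and> int p dvd poly f (int r)}
    \<subseteq> insert a {r. r < p \<and> int p dvd poly (synthetic_div f (int a)) (int r)}"
proof
  let ?g = "synthetic_div f (int a)"
  fix r assume r: "r \<in> {r. r < p \<and> int p dvd poly f (int r)}"
  have "poly f (int r) = (int r - int a) * poly ?g (int r) + poly f (int a)"
    by (subst synthetic_div_correct'[of "int a" f, symmetric]) (simp add: algebra_simps)
  then have "int p dvd (int r - int a) * poly ?g (int r)"
    using r assms(3) by (metis add_diff_cancel_right' dvd_diff mem_Collect_eq)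
  then have "int p dvd int r - int a \<or> int p dvd poly ?g (int r)"
    using assms(1) by (simp add: prime_dvd_mult_iff)
  then show "r \<in> insert a {r. r < p \<and> int p dvd poly ?g (int r)}"
  proof
    assume "int p dvd int r - int a"
    then have "[r = a] (mod p)"
      by (simp add: cong_iff_dvd_diff flip: cong_int_iff)
    with r assms(2) show ?thesis
      by (simp add: cong_less_modulus_unique_nat)
  qed (use r in simp)
qed

lemma card_roots_mod_prime_le_degree:
  fixes f :: "int poly"
  assumes "prime p" and "\<exists>i. \<not> int p dvd coeff f i"
  shows "card {r. r < p \<and> int p dvd poly f (int r)} \<le> degree f"
  using assms(2)
proof (induction "degree f" arbitrary: f rule: less_induct)
  case less
  show ?case
  proof (cases "\<exists>a<p. int p dvd poly f (int a)")
    case False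
    then have "{r. r < p \<and> int p dvd poly f (int r)} = {}"
      by auto
    then show ?thesis
      by (metis card.empty le0)
  next
    case True
    then obtain a where a: "a < p" "int p dvd poly f (int a)"
      by blast
    let ?g = "synthetic_div f (int a)"
    have g: "\<exists>i. \<not> int p dvd coeff ?g i"
      using a(2) less.prems by (rule synthetic_div_not_all_coeffs_dvd)
    then have "?g \<noteq> 0"
      by auto
    then have deg_g: "degree ?g < degree f"
      by (simp add: synthetic_div_eq_0_iff degree_synthetic_div)
    have "card {r. r < p \<and> int p dvd poly f (int r)} \<le> card (insert a {r. r < p \<and> int p dvd poly ?g (int r)})"
      using assms(1) a by (intro card_mono roots_mod_prime_subset_synthetic_div) auto
    also have "\<dots> \<le> Suc (card {r. r < p \<and> int p dvd poly ?g (int r)})"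
      by (simp add: card_insert_if)
    also have "\<dots> \<le> degree f"
      using less.hyps[OF deg_g g] deg_g by simp
    finally show ?thesis .
  qed
qed

definition binpoly_period :: "nat \<Rightarrow> nat \<Rightarrow> nat" where
  "binpoly_period k p = p ^ Suc (multiplicity p (fact k :: nat))"

lemma binpoly_period_pos: "prime p \<Longrightarrow> binpoly_period k p > 0"
  by (simp add: binpoly_period_def prime_gt_0_nat)

lemma binpoly_period_eq_prime:
  assumes "prime p" "k < p"
  shows "binpoly_period k p = p"
proof -
  have "\<not> p dvd fact k"
    using assms by (simp add: prime_dvd_fact_iff)
  then show ?thesis
    by (simp add: binpoly_period_def not_dvd_imp_multiplicity_0)
qed

text \<open>Since \<open>j * (L choose j) = L * (L - 1 choose j - 1)\<close>, if \<open>p\<close> did not divide \<open>L choose j\<close>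
  the period would divide \<open>j\<close> and hence \<open>k!\<close>.\<close>
lemma prime_dvd_choose_of_period_dvd:
  assumes p: "prime p" and L: "binpoly_period k p dvd L" and j: "1 \<le> j" "j \<le> k"
  shows "p dvd (L choose j)"
proof (rule ccontr)
  assume "\<not> p dvd (L choose j)"
  then have "coprime (binpoly_period k p) (L choose j)"
    unfolding binpoly_period_def using p by (simp add: prime_imp_coprime)
  moreover have "binpoly_period k p dvd j * (L choose j)"
    using L j binomial_absorption[of "j - 1" L] by simp
  ultimately have "binpoly_period k p dvd j"
    by (simp add: coprime_dvd_mult_left_iff)
  also have "j dvd fact k"
    using j by (rule dvd_fact)
  finally have "p ^ Suc (multiplicity p (fact k :: nat)) dvd fact k"
    by (simp add: binpoly_period_def)
  then have "Suc (multiplicity p (fact k :: nat)) \<le> multiplicity p (fact k :: nat)"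
    using p by (intro multiplicity_geI) (auto simp: not_prime_unit)
  then show False
    by simp
qed

lemma choose_add_period_cong:
  assumes "prime p" "binpoly_period k p dvd L" "i \<le> k"
  shows "[(y + L) choose i = y choose i] (mod p)"
proof -
  have "(y + L) choose i = (\<Sum>j\<le>i. (L choose j) * (y choose (i - j)))"
    using vandermonde[of L y i] by (simp add: add.commute)
  also have "{..i} = insert 0 {1..i}"
    by auto
  also have "(\<Sum>j\<in>insert 0 {1..i}. (L choose j) * (y choose (i - j)))
      = (y choose i) + (\<Sum>j=1..i. (L choose j) * (y choose (i - j)))"
    by (subst sum.insert) auto
  finally have eq: "(y + L) choose i = (y choose i) + (\<Sum>j=1..i. (L choose j) * (y choose (i - j)))" .
  have "p dvd (\<Sum>j=1..i. (L choose j) * (y choose (i - j)))"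
    using assms by (intro dvd_sum dvd_mult2 prime_dvd_choose_of_period_dvd) auto
  then show ?thesis
    unfolding eq by (simp add: cong_add_lcancel_0_nat cong_0_iff)
qed

lemma binpoly_add_period_cong:
  assumes "prime p" "binpoly_period k p dvd L"
  shows "[binpoly \<alpha> k (y + L) = binpoly \<alpha> k y] (mod int p)"
  unfolding binpoly_def using assms
  by (intro cong_sum cong_mult cong_refl) (auto simp: cong_int_iff intro: choose_add_period_cong)

lemma prime_dvd_binpoly_iff_mod_period:
  assumes "prime p"
  shows "int p dvd binpoly \<alpha> k y \<longleftrightarrow> int p dvd binpoly \<alpha> k (y mod binpoly_period k p)"
proof -
  let ?q = "binpoly_period k p"
  have "[binpoly \<alpha> k (y mod ?q + ?q * (y div ?q)) = binpoly \<alpha> k (y mod ?q)] (mod int p)"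
    using assms by (intro binpoly_add_period_cong) auto
  then show ?thesis
    by (simp add: cong_dvd_iff)
qed

text \<open>The coefficients come from \<open>k! * (x choose i) = (k! div i!) * x (x - 1) \<cdots> (x - i + 1)\<close>.\<close>
definition fact_binpoly_poly :: "(nat \<Rightarrow> int) \<Rightarrow> nat \<Rightarrow> int poly" where
  "fact_binpoly_poly \<alpha> k = (\<Sum>i\<le>k. smult (\<alpha> i * (fact k div fact i)) (\<Prod>j<i. [:- int j, 1:]))"

lemma poly_fact_binpoly_poly: "poly (fact_binpoly_poly \<alpha> k) (int m) = fact k * binpoly \<alpha> k m"
proof -
  have falling: "(\<Prod>j<i. (int m - int j)) = fact i * int (m choose i)" for i
  proof -
    have "real_of_int (\<Prod>j<i. (int m - int j)) = (\<Prod>j=0..<i. (real m - real j))"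
      by (simp add: lessThan_atLeast0)
    also have "\<dots> = fact i * real (m choose i)"
      by (simp add: gbinomial_mult_fact[symmetric] binomial_gbinomial)
    also have "\<dots> = real_of_int (fact i * int (m choose i))"
      by simp
    finally show ?thesis
      by (simp only: of_int_eq_iff)
  qed
  have "poly (fact_binpoly_poly \<alpha> k) (int m)
      = (\<Sum>i\<le>k. \<alpha> i * (fact k div fact i) * (\<Prod>j<i. (int m - int j)))"
    by (simp add: fact_binpoly_poly_def poly_sum poly_prod)
  also have "\<dots> = (\<Sum>i\<le>k. fact k * (\<alpha> i * int (m choose i)))"
  proof (rule sum.cong)
    fix i assume "i \<in> {..k}"
    then have "(fact k div fact i) * fact i = (fact k :: int)"
      by (simp add: fact_dvd)
    then show "\<alpha> i * (fact k div fact i) * (\<Prod>j<i. (int m - int j)) = fact k * (\<alpha> i * int (m choose i))"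
      unfolding falling by (metis mult.assoc mult.commute)
  qed simp
  also have "\<dots> = fact k * binpoly \<alpha> k m"
    by (simp add: binpoly_def sum_distrib_left)
  finally show ?thesis .
qed

lemma degree_fact_binpoly_poly_le: "degree (fact_binpoly_poly \<alpha> k) \<le> k"
  unfolding fact_binpoly_poly_def
proof (intro degree_sum_le)
  fix i assume "i \<in> {..k}"
  moreover have "degree (\<Prod>j<i. [:- int j, 1:]) \<le> i"
    using degree_prod_sum_le[of "{..<i}" "\<lambda>j. [:- int j, 1:]"] by simp
  ultimately show "degree (smult (\<alpha> i * (fact k div fact i)) (\<Prod>j<i. [:- int j, 1:])) \<le> k"
    by (meson atMost_iff degree_smult_le le_trans)
qed simp

lemma complete_seq_not_all_dvd:
  fixes d :: int
  assumes "complete_seq f" "\<not> is_unit d"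
  shows "\<exists>m. \<not> d dvd f m"
proof (rule ccontr)
  assume "\<not> ?thesis"
  then have all_dvd: "\<forall>m. d dvd f m"
    by blast
  obtain N :: int where N: "\<forall>n\<ge>N. n > 0 \<longrightarrow> (\<exists>S. finite S \<and> S \<subseteq> {1..} \<and> n = (\<Sum>m\<in>S. f m))"
    using assms(1) unfolding complete_seq_def by blast
  have dvd: "d dvd n" if "n \<ge> \<bar>N\<bar> + 1" for n
  proof -
    have "n \<ge> N" "n > 0"
      using that by auto
    with N obtain S where "n = (\<Sum>m\<in>S. f m)"
      by blast
    with all_dvd show ?thesis
      by (simp add: dvd_sum)
  qed
  have "d dvd (\<bar>N\<bar> + 2) - (\<bar>N\<bar> + 1)"
    by (intro dvd_diff dvd) auto
  with assms(2) show False
    by simp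
qed

definition surviving_residues :: "(nat \<Rightarrow> int) \<Rightarrow> nat \<Rightarrow> nat \<Rightarrow> nat set" where
  "surviving_residues \<alpha> k p = {r. r < binpoly_period k p \<and> \<not> int p dvd binpoly \<alpha> k r}"

lemma surviving_residues_nonempty:
  assumes "complete_seq (binpoly \<alpha> k)" "prime p"
  shows "surviving_residues \<alpha> k p \<noteq> {}"
proof -
  obtain m where "\<not> int p dvd binpoly \<alpha> k m"
    using complete_seq_not_all_dvd[OF assms(1), of "int p"] prime_gt_1_nat[OF assms(2)] by auto
  then have "m mod binpoly_period k p \<in> surviving_residues \<alpha> k p"
    using prime_dvd_binpoly_iff_mod_period[OF assms(2), of \<alpha> k m] binpoly_period_pos[OF assms(2), of k]
    by (simp add: surviving_residues_def)
  then show ?thesis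
    by blast
qed

lemma card_surviving_residues_ge:
  assumes "complete_seq (binpoly \<alpha> k)" "prime p" "k < p"
  shows "p - k \<le> card (surviving_residues \<alpha> k p)"
proof -
  let ?f = "fact_binpoly_poly \<alpha> k"
  let ?R = "{r. r < p \<and> int p dvd binpoly \<alpha> k r}"
  have "\<not> p dvd fact k"
    using assms(2,3) by (simp add: prime_dvd_fact_iff)
  then have "\<not> int p dvd fact k"
    by (metis int_dvd_int_iff of_nat_fact)
  then have roots: "int p dvd poly ?f (int r) \<longleftrightarrow> int p dvd binpoly \<alpha> k r" for r
    using assms(2) by (simp add: poly_fact_binpoly_poly prime_dvd_mult_iff)
  have "\<exists>i. \<not> int p dvd coeff ?f i"
  proof (rule ccontr)
    assume "\<not> ?thesis"
    then have "int p dvd coeff ?f i" for i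
      by blast
    then have "int p dvd binpoly \<alpha> k m" for m
      unfolding roots[symmetric] poly_altdef by (intro dvd_sum dvd_mult2)
    then show False
      using complete_seq_not_all_dvd[OF assms(1), of "int p"] prime_gt_1_nat[OF assms(2)] by auto
  qed
  then have "card {r. r < p \<and> int p dvd poly ?f (int r)} \<le> degree ?f"
    by (rule card_roots_mod_prime_le_degree[OF assms(2)])
  then have "card ?R \<le> k"
    using degree_fact_binpoly_poly_le[of \<alpha> k] by (simp add: roots)
  moreover have "surviving_residues \<alpha> k p = {..<p} - ?R"
    using assms by (auto simp: surviving_residues_def binpoly_period_eq_prime)
  moreover have "card ({..<p} - ?R) = p - card ?R"
    by (subst card_Diff_subset) auto
  ultimately show ?thesis
    by simp
qed

section \<open>Counting periodic sets\<close>

lemma card_periodic_lessThan: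
  assumes "\<And>y. A (y + T) = A y"
  shows "card {y. y < m * T + b \<and> A y} = m * card {y. y < T \<and> A y} + card {y. y < b \<and> A y}"
proof (induction m)
  case (Suc m)
  let ?shifted = "(\<lambda>y. y + T) ` {y. y < m * T + b \<and> A y}"
  have "{y. y < Suc m * T + b \<and> A y} = {y. y < T \<and> A y} \<union> ?shifted"
  proof (intro equalityI subsetI)
    fix y assume y: "y \<in> {y. y < Suc m * T + b \<and> A y}"
    show "y \<in> {y. y < T \<and> A y} \<union> ?shifted"
    proof (cases "y < T")
      case False
      then have "y = (y - T) + T" "A (y - T)"
        using y assms[of "y - T"] by auto
      with y show ?thesis
        by (auto intro!: image_eqI[of y _ "y - T"])
    qed (use y in auto)
  qed (auto simp: assms)
  moreover have "card ({y. y < T \<and> A y} \<union> ?shifted) = card {y. y < T \<and> A y} + card ?shifted"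
    by (rule card_Un_disjoint) auto
  moreover have "card ?shifted = card {y. y < m * T + b \<and> A y}"
    by (rule card_image) (simp add: inj_on_def)
  ultimately show ?case
    using Suc.IH by simp
qed simp

lemma card_periodic_interval:
  assumes "\<And>y. A (y + T) = A y"
  shows "card {y. a \<le> y \<and> y < a + m * T \<and> A y} = m * card {y. y < T \<and> A y}"
proof -
  have "{y. y < m * T + a \<and> A y} = {y. y < a \<and> A y} \<union> {y. a \<le> y \<and> y < a + m * T \<and> A y}"
    by auto
  then have "card {y. y < m * T + a \<and> A y} = card {y. y < a \<and> A y} + card {y. a \<le> y \<and> y < a + m * T \<and> A y}"
    by (simp add: card_Un_disjoint disjoint_iff)
  with card_periodic_lessThan[of A T m a, OF assms] show ?thesis
    by simp
qed

lemma bij_betw_mod_pair: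
  fixes M N :: nat
  assumes "coprime M N" "M > 0" "N > 0"
  shows "bij_betw (\<lambda>y. (y mod M, y mod N)) {..<M * N} ({..<M} \<times> {..<N})"
proof (rule bij_betw_imageI)
  show "inj_on (\<lambda>y. (y mod M, y mod N)) {..<M * N}"
  proof (rule inj_onI)
    fix x y assume "x \<in> {..<M * N}" "y \<in> {..<M * N}" "(x mod M, x mod N) = (y mod M, y mod N)"
    moreover from this have "[x = y] (mod M * N)"
      using assms(1) by (intro coprime_cong_mult_nat) (auto simp: cong_def)
    ultimately show "x = y"
      by (auto intro: cong_less_modulus_unique_nat)
  qed
  show "(\<lambda>y. (y mod M, y mod N)) ` {..<M * N} = {..<M} \<times> {..<N}"
  proof safe
    fix a b assume "a < M" "b < N"
    then obtain y where "y < M * N" "y mod M = a" "y mod N = b"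
      using binary_chinese_remainder_unique_nat[OF assms(1), of a b] assms by (auto simp: cong_def)
    then show "(a, b) \<in> (\<lambda>y. (y mod M, y mod N)) ` {..<M * N}"
      by force
  qed (use assms in auto)
qed

lemma card_coprime_moduli_conj:
  fixes M N :: nat
  assumes "coprime M N" "M > 0" "N > 0"
    and A: "\<And>y. A (y mod M) = A y" and B: "\<And>y. B (y mod N) = B y"
  shows "card {y. y < M * N \<and> A y \<and> B y} = card {a. a < M \<and> A a} * card {b. b < N \<and> B b}"
proof -
  have "bij_betw (\<lambda>y. (y mod M, y mod N)) {y\<in>{..<M * N}. A y \<and> B y}
      {r\<in>{..<M} \<times> {..<N}. A (fst r) \<and> B (snd r)}"
    by (rule bij_betw_Collect[OF bij_betw_mod_pair[OF assms(1-3)]]) (simp add: A B)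
  then have "card {y\<in>{..<M * N}. A y \<and> B y} = card {r\<in>{..<M} \<times> {..<N}. A (fst r) \<and> B (snd r)}"
    by (rule bij_betw_same_card)
  also have "{r\<in>{..<M} \<times> {..<N}. A (fst r) \<and> B (snd r)} = {a. a < M \<and> A a} \<times> {b. b < N \<and> B b}"
    by auto
  finally show ?thesis
    by (simp add: card_cartesian_product)
qed

lemma card_pairwise_coprime_moduli_conj:
  fixes q :: "'a \<Rightarrow> nat"
  assumes "finite S" "\<And>i. i \<in> S \<Longrightarrow> q i > 0"
    and "\<And>i j. i \<in> S \<Longrightarrow> j \<in> S \<Longrightarrow> i \<noteq> j \<Longrightarrow> coprime (q i) (q j)"
    and "\<And>i y. i \<in> S \<Longrightarrow> A i (y mod q i) = A i y"
  shows "card {y. y < prod q S \<and> (\<forall>i\<in>S. A i y)} = (\<Prod>i\<in>S. card {r. r < q i \<and> A i r})"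
  using assms
proof (induction S rule: finite_induct)
  case (insert i S)
  have IH: "card {y. y < prod q S \<and> (\<forall>j\<in>S. A j y)} = (\<Prod>j\<in>S. card {r. r < q j \<and> A j r})"
    using insert.prems by (intro insert.IH) auto
  have "coprime (q i) (prod q S)"
    using insert by (intro prod_coprime_right) auto
  moreover have "A j (y mod prod q S) = A j y" if "j \<in> S" for j y
  proof -
    have per: "A j (z mod q j) = A j z" for z
      using insert.prems(3) that by blast
    have "q j dvd prod q S"
      using insert.hyps(1) that by (rule dvd_prodI)
    then have "y mod prod q S mod q j = y mod q j"
      by (rule mod_mod_cancel)
    then show ?thesis
      using per[of y] per[of "y mod prod q S"] by simp
  qed
  ultimately have "card {y. y < q i * prod q S \<and> A i y \<and> (\<forall>j\<in>S. A j y)}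
      = card {r. r < q i \<and> A i r} * card {y. y < prod q S \<and> (\<forall>j\<in>S. A j y)}"
    using insert.prems by (intro card_coprime_moduli_conj) (auto simp: prod_pos)
  with insert IH show ?case
    by simp
qed simp

section \<open>The sieve\<close>

definition sifted :: "(nat \<Rightarrow> int) \<Rightarrow> nat \<Rightarrow> nat \<Rightarrow> nat \<Rightarrow> bool" where
  "sifted \<alpha> k w y \<longleftrightarrow> (\<forall>p. prime p \<and> p \<le> w \<longrightarrow> \<not> int p dvd binpoly \<alpha> k y)"

definition sieve_modulus :: "nat \<Rightarrow> nat \<Rightarrow> nat" where
  "sieve_modulus k w = (\<Prod>p | prime p \<and> p \<le> w. binpoly_period k p)"

lemma sieve_modulus_pos: "sieve_modulus k w > 0"
  unfolding sieve_modulus_def by (rule prod_pos) (simp add: binpoly_period_pos)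

lemma sifted_add_sieve_modulus: "sifted \<alpha> k w (y + sieve_modulus k w) = sifted \<alpha> k w y"
proof -
  have "int p dvd binpoly \<alpha> k (y + sieve_modulus k w) \<longleftrightarrow> int p dvd binpoly \<alpha> k y"
    if "prime p" "p \<le> w" for p
  proof (rule cong_dvd_iff)
    have "binpoly_period k p dvd sieve_modulus k w"
      unfolding sieve_modulus_def using that by (intro dvd_prodI) auto
    then show "[binpoly \<alpha> k (y + sieve_modulus k w) = binpoly \<alpha> k y] (mod int p)"
      using that(1) by (rule binpoly_add_period_cong[rotated])
  qed
  then show ?thesis
    unfolding sifted_def by blast
qed

lemma card_sifted_residues:
  "card {y. y < sieve_modulus k w \<and> sifted \<alpha> k w y}
    = (\<Prod>p | prime p \<and> p \<le> w. card (surviving_residues \<alpha> k p))"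
proof -
  have "card {y. y < sieve_modulus k w \<and> (\<forall>p\<in>{p. prime p \<and> p \<le> w}. \<not> int p dvd binpoly \<alpha> k y)}
      = (\<Prod>p | prime p \<and> p \<le> w. card {r. r < binpoly_period k p \<and> \<not> int p dvd binpoly \<alpha> k r})"
    unfolding sieve_modulus_def
  proof (rule card_pairwise_coprime_moduli_conj)
    show "coprime (binpoly_period k p) (binpoly_period k q)"
      if "p \<in> {p. prime p \<and> p \<le> w}" "q \<in> {p. prime p \<and> p \<le> w}" "p \<noteq> q" for p q
      using that by (simp add: binpoly_period_def primes_coprime)
    show "(\<not> int p dvd binpoly \<alpha> k (y mod binpoly_period k p)) = (\<not> int p dvd binpoly \<alpha> k y)"
      if "p \<in> {p. prime p \<and> p \<le> w}" for p y
      using that prime_dvd_binpoly_iff_mod_period[of p \<alpha> k y] by simp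
  qed (auto simp: binpoly_period_pos)
  then show ?thesis
    by (simp add: sifted_def surviving_residues_def)
qed

lemma sieve_modulus_le: "sieve_modulus k w \<le> (\<Prod>p | prime p \<and> p \<le> k. binpoly_period k p) * 4 ^ w"
proof -
  let ?S = "{p. prime p \<and> p \<le> w}"
  have "sieve_modulus k w = (\<Prod>p\<in>?S \<inter> {..k}. binpoly_period k p) * (\<Prod>p\<in>?S - {..k}. binpoly_period k p)"
    unfolding sieve_modulus_def by (rule prod.Int_Diff) simp
  also have "(\<Prod>p\<in>?S - {..k}. binpoly_period k p) = \<Prod>(?S - {..k})"
    by (intro prod.cong) (auto simp: binpoly_period_eq_prime)
  also have "\<dots> \<le> \<Prod>?S"
    by (intro dvd_imp_le prod_dvd_prod_subset) (auto simp: prime_gt_0_nat intro!: prod_pos)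
  also have "\<dots> \<le> 4 ^ w"
    by (rule prod_primes_le_four_pow)
  also have "(\<Prod>p\<in>?S \<inter> {..k}. binpoly_period k p) \<le> (\<Prod>p | prime p \<and> p \<le> k. binpoly_period k p)"
    by (intro dvd_imp_le prod_dvd_prod_subset) (auto simp: binpoly_period_pos intro!: prod_pos)
  finally show ?thesis
    by simp
qed

definition survival_density :: "(nat \<Rightarrow> int) \<Rightarrow> nat \<Rightarrow> nat \<Rightarrow> real" where
  "survival_density \<alpha> k p = card (surviving_residues \<alpha> k p) / binpoly_period k p"

lemma sifted_density_eq_prod:
  "card {y. y < sieve_modulus k w \<and> sifted \<alpha> k w y} / sieve_modulus k w
    = (\<Prod>p | prime p \<and> p \<le> w. survival_density \<alpha> k p)"
proof -
  have "real (card {y. y < sieve_modulus k w \<and> sifted \<alpha> k w y})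
      = (\<Prod>p | prime p \<and> p \<le> w. real (card (surviving_residues \<alpha> k p)))"
    by (simp add: card_sifted_residues)
  moreover have "real (sieve_modulus k w) = (\<Prod>p | prime p \<and> p \<le> w. real (binpoly_period k p))"
    by (simp add: sieve_modulus_def)
  ultimately show ?thesis
    by (simp add: survival_density_def prod_dividef)
qed

lemma survival_density_ge_inverse_period:
  assumes "complete_seq (binpoly \<alpha> k)" "prime p"
  shows "1 / binpoly_period k p \<le> survival_density \<alpha> k p"
proof -
  have "card (surviving_residues \<alpha> k p) \<ge> 1"
    using surviving_residues_nonempty[OF assms]
    by (simp add: Suc_le_eq card_gt_0_iff surviving_residues_def)
  then show ?thesis
    by (simp add: survival_density_def divide_right_mono)
qed

lemma survival_density_ge:
  assumes "complete_seq (binpoly \<alpha> k)" "prime p" "k < p"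
  shows "1 - real k / real p \<le> survival_density \<alpha> k p"
proof -
  have "real p - real k \<le> real (card (surviving_residues \<alpha> k p))"
    using card_surviving_residues_ge[OF assms] assms(3) by (simp add: of_nat_diff)
  moreover have "1 - real k / real p = (real p - real k) / real p"
    using assms(3) by (simp add: field_simps)
  ultimately show ?thesis
    using assms by (simp add: survival_density_def binpoly_period_eq_prime divide_right_mono)
qed

lemma prod_survival_density_ge_inverse:
  assumes "complete_seq (binpoly \<alpha> k)" "finite B" "A \<subseteq> B" "\<And>p. p \<in> B \<Longrightarrow> prime p"
  shows "1 / real (\<Prod>p\<in>B. binpoly_period k p) \<le> (\<Prod>p\<in>A. survival_density \<alpha> k p)"
proof -
  have "(\<Prod>p\<in>A. binpoly_period k p) \<le> (\<Prod>p\<in>B. binpoly_period k p)"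
    using assms by (intro dvd_imp_le prod_dvd_prod_subset) (auto simp: prod_pos binpoly_period_pos)
  then have le: "real (\<Prod>p\<in>A. binpoly_period k p) \<le> real (\<Prod>p\<in>B. binpoly_period k p)"
    by (simp only: of_nat_le_iff)
  have "0 < (\<Prod>p\<in>A. binpoly_period k p)"
    using assms by (intro prod_pos) (auto simp: binpoly_period_pos)
  then have "0 < real (\<Prod>p\<in>A. binpoly_period k p)"
    by (simp only: of_nat_0_less_iff)
  with le have "1 / real (\<Prod>p\<in>B. binpoly_period k p) \<le> 1 / real (\<Prod>p\<in>A. binpoly_period k p)"
    by (intro divide_left_mono mult_pos_pos) auto
  also have "\<dots> = (\<Prod>p\<in>A. 1 / real (binpoly_period k p))"
    by (simp add: prod_dividef)
  also have "\<dots> \<le> (\<Prod>p\<in>A. survival_density \<alpha> k p)"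
    using assms by (intro prod_mono) (auto simp: survival_density_ge_inverse_period)
  finally show ?thesis .
qed

lemma sifted_density_ge:
  "\<exists>c>0. \<forall>\<alpha> w. complete_seq (binpoly \<alpha> k) \<longrightarrow> 2 \<le> w \<longrightarrow>
      c * ln (real w) powr - real k
        \<le> card {y. y < sieve_modulus k w \<and> sifted \<alpha> k w y} / sieve_modulus k w"
proof -
  obtain c where c: "c > 0"
    and large: "\<And>w. w \<ge> 2 \<Longrightarrow> c * ln (real w) powr - real k
        \<le> (\<Prod>p | prime p \<and> 2 * k < p \<and> p \<le> w. 1 - real k / real p)"
    using prod_one_minus_div_primes_ge by blast
  define C where "C = real (\<Prod>p | prime p \<and> p \<le> 2 * k. binpoly_period k p)"
  have "(\<Prod>p | prime p \<and> p \<le> 2 * k. binpoly_period k p) > 0"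
    by (intro prod_pos) (auto simp: binpoly_period_pos)
  then have "C > 0"
    unfolding C_def by (simp only: of_nat_0_less_iff)
  show ?thesis
  proof (intro exI conjI allI impI)
    show "c / C > 0"
      using c \<open>C > 0\<close> by simp
    fix \<alpha> :: "nat \<Rightarrow> int" and w :: nat
    assume complete: "complete_seq (binpoly \<alpha> k)" and w: "2 \<le> w"
    let ?S = "{p. prime p \<and> p \<le> w}"
    let ?f = "survival_density \<alpha> k"
    have small: "1 / C \<le> (\<Prod>p\<in>?S \<inter> {..2 * k}. ?f p)"
      unfolding C_def using complete by (intro prod_survival_density_ge_inverse) auto
    have "?S - {..2 * k} = {p. prime p \<and> 2 * k < p \<and> p \<le> w}"
      by auto
    then have "(\<Prod>p | prime p \<and> 2 * k < p \<and> p \<le> w. 1 - real k / real p) \<le> (\<Prod>p\<in>?S - {..2 * k}. ?f p)"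
    proof (simp only:, intro prod_mono conjI)
      fix p assume "p \<in> {p. prime p \<and> 2 * k < p \<and> p \<le> w}"
      then have p: "prime p" "2 * k < p"
        by auto
      then show "0 \<le> 1 - real k / real p"
        by (simp add: field_simps)
      show "1 - real k / real p \<le> ?f p"
        using complete p by (intro survival_density_ge) auto
    qed
    with large[OF w] have "c * ln (real w) powr - real k \<le> (\<Prod>p\<in>?S - {..2 * k}. ?f p)"
      by linarith
    with small c \<open>C > 0\<close>
    have "1 / C * (c * ln (real w) powr - real k) \<le> (\<Prod>p\<in>?S \<inter> {..2 * k}. ?f p) * (\<Prod>p\<in>?S - {..2 * k}. ?f p)"
      by (intro mult_mono) (auto intro!: prod_nonneg simp: survival_density_def)
    then show "c / C * ln (real w) powr - real k
        \<le> card {y. y < sieve_modulus k w \<and> sifted \<alpha> k w y} / sieve_modulus k w"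
      using prod.Int_Diff[of ?S ?f "{..2 * k}"] by (simp add: sifted_density_eq_prod)
  qed
qed

lemma card_periodic_real_interval_ge:
  fixes x h :: real and T :: nat
  assumes "T > 0" "\<And>y. A (y + T) = A y" "0 \<le> x"
  shows "((h - 1) / T - 1) * card {y. y < T \<and> A y} \<le> card {y. x \<le> real y \<and> real y < x + h \<and> A y}"
proof -
  define a where "a = nat \<lceil>x\<rceil>"
  define m where "m = nat \<lfloor>(h - 1) / T\<rfloor>"
  have a: "x \<le> real a" "real a < x + 1"
    unfolding a_def using assms(3) by linarith+
  have m: "(h - 1) / T - 1 \<le> real m"
    unfolding m_def by linarith
  have mT: "real m * T \<le> h - 1" if "m > 0"
  proof -
    have "real m \<le> (h - 1) / T"
      using that unfolding m_def by linarith
    then show ?thesis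
      using assms(1) by (simp add: le_divide_eq)
  qed
  have "{y. a \<le> y \<and> y < a + m * T \<and> A y} \<subseteq> {y. x \<le> real y \<and> real y < x + h \<and> A y}"
  proof safe
    fix y assume y: "a \<le> y" "y < a + m * T"
    then have "m > 0"
      by (cases m) auto
    have "real y < real (a + m * T)"
      using y(2) by (simp only: of_nat_less_iff)
    with \<open>m > 0\<close> a mT show "real y < x + h"
      by simp
    show "x \<le> real y"
      using y a by linarith
  qed
  moreover have "finite {y. x \<le> real y \<and> real y < x + h \<and> A y}"
    by (rule finite_subset[of _ "{..nat \<lceil>x + h\<rceil>}"]) (auto, linarith)
  ultimately have "card {y. a \<le> y \<and> y < a + m * T \<and> A y} \<le> card {y. x \<le> real y \<and> real y < x + h \<and> A y}"
    by (rule card_mono[rotated])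
  then have "real m * card {y. y < T \<and> A y} \<le> card {y. x \<le> real y \<and> real y < x + h \<and> A y}"
    unfolding card_periodic_interval[of A T, OF assms(2)] by (simp flip: of_nat_mult)
  moreover have "((h - 1) / T - 1) * card {y. y < T \<and> A y} \<le> real m * card {y. y < T \<and> A y}"
    using m by (intro mult_right_mono) auto
  ultimately show ?thesis
    by linarith
qed

lemma card_sifted_interval_ge:
  fixes x :: real
  assumes "k \<ge> 1" "0 \<le> x" "1 + real (sieve_modulus k w) \<le> x / (2 * real k)"
  shows "x / (2 * real k) * (card {y. y < sieve_modulus k w \<and> sifted \<alpha> k w y} / sieve_modulus k w)
      \<le> card {y. x \<le> real y \<and> real y < (1 + 1 / real k) * x \<and> sifted \<alpha> k w y}"
proof -
  let ?T = "real (sieve_modulus k w)" and ?G = "real (card {y. y < sieve_modulus k w \<and> sifted \<alpha> k w y})"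
  have T: "?T > 0"
    using sieve_modulus_pos by simp
  have "x / (2 * real k) * (?G / ?T) \<le> (x / real k - 1 - ?T) * (?G / ?T)"
    using assms(3) by (intro mult_right_mono) auto
  also have "\<dots> = ((x / real k - 1) / ?T - 1) * ?G"
    using T by (simp add: field_simps)
  also have "\<dots> \<le> card {y. x \<le> real y \<and> real y < x + x / real k \<and> sifted \<alpha> k w y}"
    using sieve_modulus_pos assms(2)
    by (intro card_periodic_real_interval_ge) (auto simp: sifted_add_sieve_modulus)
  also have "x + x / real k = (1 + 1 / real k) * x"
    by (simp add: algebra_simps)
  finally show ?thesis .
qed

lemma four_pow_le_powr_ln2:
  fixes x :: real
  assumes "0 < x" "real w \<le> ln x / 2"
  shows "4 ^ w \<le> x powr ln 2"
proof -
  have "(4::real) ^ w = exp (real w * ln 4)"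
    by (simp add: exp_of_nat_mult)
  also have "\<dots> = exp (2 * real w * ln 2)"
    using ln_realpow[of 2 2] by simp
  also have "\<dots> \<le> exp (ln x * ln 2)"
    using assms(2) by (intro exp_mono mult_right_mono) auto
  also have "\<dots> = x powr ln 2"
    using assms(1) by (simp add: powr_def mult.commute)
  finally show ?thesis .
qed

lemma sieve_modulus_le_powr:
  fixes x :: real
  assumes "0 < x" "real w \<le> ln x / 2"
  shows "real (sieve_modulus k w) \<le> real (\<Prod>p | prime p \<and> p \<le> k. binpoly_period k p) * x powr ln 2"
proof -
  have "real (sieve_modulus k w) \<le> real ((\<Prod>p | prime p \<and> p \<le> k. binpoly_period k p) * 4 ^ w)"
    using sieve_modulus_le[of k w] by (simp only: of_nat_le_iff)
  also have "\<dots> = real (\<Prod>p | prime p \<and> p \<le> k. binpoly_period k p) * 4 ^ w"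
    by simp
  also have "\<dots> \<le> real (\<Prod>p | prime p \<and> p \<le> k. binpoly_period k p) * x powr ln 2"
    using four_pow_le_powr_ln2[OF assms] by (intro mult_left_mono) (auto intro: prod_nonneg)
  finally show ?thesis .
qed

lemma eventually_one_plus_powr_le:
  fixes C e \<epsilon> :: real
  assumes "e < 1" "\<epsilon> > 0"
  shows "eventually (\<lambda>x. 1 + C * x powr e \<le> \<epsilon> * x) at_top"
proof -
  define q where "q = \<epsilon> / (2 * (\<bar>C\<bar> + 1))"
  have "((\<lambda>x. x powr (e - 1)) \<longlongrightarrow> 0) at_top"
    using assms(1) by (intro tendsto_neg_powr filterlim_ident) auto
  moreover have "q > 0"
    using assms(2) by (simp add: q_def)
  ultimately have "eventually (\<lambda>x. x powr (e - 1) < q) at_top"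
    by (rule order_tendstoD(2))
  moreover have "eventually (\<lambda>x. x \<ge> max 1 (2 / \<epsilon>)) at_top"
    by (rule eventually_ge_at_top)
  ultimately show ?thesis
  proof eventually_elim
    case (elim x)
    then have x: "x > 0" "2 / \<epsilon> \<le> x"
      by auto
    have "C * x powr e \<le> \<bar>C\<bar> * (x * x powr (e - 1))"
      using x by (simp add: powr_add[of x 1 "e - 1", simplified] abs_mult_pos' flip: abs_mult)
    also have "\<dots> \<le> (\<bar>C\<bar> + 1) * (x * q)"
      using elim x by (intro mult_mono) auto
    also have "\<dots> = \<epsilon> * x / 2"
      by (simp add: q_def field_simps)
    finally show ?case
      using x assms(2) by (simp add: field_simps)
  qed
qed

lemma sieve_modulus_eventually_small:
  assumes "k \<ge> 1"
  shows "\<exists>x0. \<forall>x\<ge>x0. \<forall>w. real w \<le> ln x / 2 \<longrightarrow> 1 \<le> x \<and> 1 + real (sieve_modulus k w) \<le> x / (2 * real k)"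
proof -
  define C where "C = real (\<Prod>p | prime p \<and> p \<le> k. binpoly_period k p)"
  have "eventually (\<lambda>x. 1 + C * x powr ln 2 \<le> 1 / (2 * real k) * x) at_top"
    using ln_2_less_1 assms by (intro eventually_one_plus_powr_le) auto
  then have "eventually (\<lambda>x. 1 \<le> x \<and> 1 + C * x powr ln 2 \<le> 1 / (2 * real k) * x) at_top"
    by (intro eventually_conj eventually_ge_at_top)
  then obtain x0 where x0: "\<And>x. x \<ge> x0 \<Longrightarrow> 1 \<le> x \<and> 1 + C * x powr ln 2 \<le> x / (2 * real k)"
    by (auto simp: eventually_at_top_linorder)
  have "1 \<le> x \<and> 1 + real (sieve_modulus k w) \<le> x / (2 * real k)" if "x \<ge> x0" "real w \<le> ln x / 2" for x w
  proof -
    have "real (sieve_modulus k w) \<le> C * x powr ln 2"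
      unfolding C_def using x0[OF that(1)] that(2) by (intro sieve_modulus_le_powr) auto
    with x0[OF that(1)] show ?thesis
      by linarith
  qed
  then show ?thesis
    by blast
qed

theorem lemma3p3:
  fixes k :: nat
  assumes "k \<ge> 1"
  shows "\<exists>c>0. \<forall>\<alpha> :: nat \<Rightarrow> int.
           \<alpha> k \<noteq> 0 \<and> complete_seq (binpoly \<alpha> k) \<longrightarrow>
           (\<exists>x0::real. \<forall>x\<ge>x0. \<forall>w::nat. 1 < w \<and> real w < ln x / 2 \<longrightarrow>
              real (card {y::nat. x \<le> real y \<and> real y < (1 + 1 / real k) * x \<and>
                   (\<forall>p::nat. prime p \<and> p \<le> w \<longrightarrow> \<not> int p dvd binpoly \<alpha> k y)})
              \<ge> c * (ln (real w)) powr (- real k) * x)"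
proof -
  obtain c where "c > 0" and density: "\<And>\<alpha> w. complete_seq (binpoly \<alpha> k) \<Longrightarrow> 2 \<le> w \<Longrightarrow>
      c * ln (real w) powr - real k \<le> card {y. y < sieve_modulus k w \<and> sifted \<alpha> k w y} / sieve_modulus k w"
    using sifted_density_ge by blast
  obtain x0 where x0: "\<And>x w. x \<ge> x0 \<Longrightarrow> real w \<le> ln x / 2 \<Longrightarrow>
      1 \<le> x \<and> 1 + real (sieve_modulus k w) \<le> x / (2 * real k)"
    using sieve_modulus_eventually_small[OF assms] by blast
  show ?thesis
  proof (rule exI[of _ "c / (2 * real k)"], intro conjI allI impI exI[of _ x0])
    show "c / (2 * real k) > 0"
      using \<open>c > 0\<close> assms by simp
    fix \<alpha> :: "nat \<Rightarrow> int" and x :: real and w :: nat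
    assume "\<alpha> k \<noteq> 0 \<and> complete_seq (binpoly \<alpha> k)" "x0 \<le> x" "1 < w \<and> real w < ln x / 2"
    then have complete: "complete_seq (binpoly \<alpha> k)" and w: "2 \<le> w"
      and x: "1 \<le> x" "1 + real (sieve_modulus k w) \<le> x / (2 * real k)"
      using x0[of x w] by auto
    have "x / (2 * real k) * (c * ln (real w) powr - real k)
        \<le> x / (2 * real k) * (card {y. y < sieve_modulus k w \<and> sifted \<alpha> k w y} / sieve_modulus k w)"
      using x(1) density[OF complete w] by (intro mult_left_mono) auto
    also have "\<dots> \<le> card {y. x \<le> real y \<and> real y < (1 + 1 / real k) * x \<and> sifted \<alpha> k w y}"
      using assms x by (intro card_sifted_interval_ge) auto
    finally show "c / (2 * real k) * ln (real w) powr - real k * x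
        \<le> real (card {y. x \<le> real y \<and> real y < (1 + 1 / real k) * x \<and>
                   (\<forall>p. prime p \<and> p \<le> w \<longrightarrow> \<not> int p dvd binpoly \<alpha> k y)})"
      by (simp add: sifted_def mult_ac)
  qed
qed

end
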